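(* Let $\mathcal C$ be a category with cofibrations (in the sense of Waldhausen) which is enriched over the category of abelian groups (hence additive), and let $w$ be an admissible class of morphisms in $\mathcal C$. Then $w$ satisfies Waldhausen's gluing axiom: given a commutative diagram $$y \leftarrow x \rightarrowtail z,\qquad y' \leftarrow x' \rightarrowtail z'$$ with $x\rightarrowtail z$ and $x'\rightarrowtail z'$ cofibrations and vertical morphisms $b\colon y\to y'$, $a\colon x\to x'$, $c\colon z\to z'$ all in $w$ and compatible with the horizontal maps, the induced morphism $b\sqcup_a c\colon y\sqcup_x z\to y'\sqcup_{x'} z'$ is in $w$. In particular $(\mathcal C,w)$ is a category with cofibrations and weak equivalences (Waldhausen category).
   Context: A cofibration sequence in $\mathcal C$ is a sequence $x\rightarrowtail y\twoheadrightarrow y/x$ where $x\rightarrowtail y$ is a cofibration and $y/x$ its cokernel (pushout along $x\to 0$). A class $w$ of morphisms in $\mathcal C$ is called admissible if: (i) $w$ contains all isomorphisms; (ii) $w$ satisfies two-out-of-three: for composable $x\xrightarrow{f}y\xrightarrow{g}z$, if two of $f,g,gf$ lie in $w$ so does the third; (iii) for any commutative diagram of cofibration sequences $x\rightarrowtail y\twoheadrightarrow y/x$ over $x'\rightarrowtail y'\twoheadrightarrow y'/x'$ with vertical maps $a\colon x\to x'$, $b\colon y\to y'$, $c\colon y/x\to y'/x'$, if two of $a,b,c$ are in $w$ then so is the third. *)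

theory Defs
  imports "HOL-Algebra.Group"
begin

text \<open>A category with cofibrations which is enriched over abelian groups, presented
  concretely: a set of objects, a set of morphisms, domain/codomain, identities,
  composition (Comp g f = g after f), addition of parallel morphisms with zero
  morphisms Zero x y, a distinguished zero object Zob and a class Cof of cofibrations.\<close>

record ('o, 'm) cofcat =
  Ob   :: "'o set"
  Mor  :: "'m set"
  Dom  :: "'m \<Rightarrow> 'o"
  Cod  :: "'m \<Rightarrow> 'o"
  Id   :: "'o \<Rightarrow> 'm"
  Comp :: "'m \<Rightarrow> 'm \<Rightarrow> 'm"
  Add  :: "'m \<Rightarrow> 'm \<Rightarrow> 'm"
  Zero :: "'o \<Rightarrow> 'o \<Rightarrow> 'm"
  Zob  :: "'o"
  Cof  :: "'m set"

definition hom :: "('o, 'm, 'e) cofcat_scheme \<Rightarrow> 'o \<Rightarrow> 'o \<Rightarrow> 'm set" where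
  "hom C x y = {f \<in> Mor C. Dom C f = x \<and> Cod C f = y}"

definition category :: "('o, 'm, 'e) cofcat_scheme \<Rightarrow> bool" where
  "category C \<longleftrightarrow>
     (\<forall>f \<in> Mor C. Dom C f \<in> Ob C \<and> Cod C f \<in> Ob C) \<and>
     (\<forall>x \<in> Ob C. Id C x \<in> hom C x x) \<and>
     (\<forall>f \<in> Mor C. \<forall>g \<in> Mor C. Cod C f = Dom C g \<longrightarrow> Comp C g f \<in> hom C (Dom C f) (Cod C g)) \<and>
     (\<forall>f \<in> Mor C. Comp C f (Id C (Dom C f)) = f \<and> Comp C (Id C (Cod C f)) f = f) \<and>
     (\<forall>f \<in> Mor C. \<forall>g \<in> Mor C. \<forall>h \<in> Mor C. Cod C f = Dom C g \<longrightarrow> Cod C g = Dom C h \<longrightarrow>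
        Comp C h (Comp C g f) = Comp C (Comp C h g) f)"

definition hom_group :: "('o, 'm, 'e) cofcat_scheme \<Rightarrow> 'o \<Rightarrow> 'o \<Rightarrow> 'm monoid" where
  "hom_group C x y = \<lparr>carrier = hom C x y, mult = Add C, one = Zero C x y\<rparr>"

definition ab_enriched :: "('o, 'm, 'e) cofcat_scheme \<Rightarrow> bool" where
  "ab_enriched C \<longleftrightarrow>
     (\<forall>x \<in> Ob C. \<forall>y \<in> Ob C. comm_group (hom_group C x y)) \<and>
     (\<forall>x \<in> Ob C. \<forall>y \<in> Ob C. \<forall>z \<in> Ob C.
        (\<forall>f \<in> hom C x y. \<forall>g \<in> hom C y z. \<forall>g' \<in> hom C y z.
            Comp C (Add C g g') f = Add C (Comp C g f) (Comp C g' f)) \<and>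
        (\<forall>f \<in> hom C x y. \<forall>f' \<in> hom C x y. \<forall>g \<in> hom C y z.
            Comp C g (Add C f f') = Add C (Comp C g f) (Comp C g f')))"

definition iso :: "('o, 'm, 'e) cofcat_scheme \<Rightarrow> 'm \<Rightarrow> bool" where
  "iso C f \<longleftrightarrow> f \<in> Mor C \<and>
     (\<exists>g \<in> hom C (Cod C f) (Dom C f). Comp C g f = Id C (Dom C f) \<and> Comp C f g = Id C (Cod C f))"

definition zero_object :: "('o, 'm, 'e) cofcat_scheme \<Rightarrow> 'o \<Rightarrow> bool" where
  "zero_object C z \<longleftrightarrow> z \<in> Ob C \<and>
     (\<forall>x \<in> Ob C. (\<exists>!f. f \<in> hom C z x) \<and> (\<exists>!f. f \<in> hom C x z))"

definition is_pushout :: "('o, 'm, 'e) cofcat_scheme \<Rightarrow> 'm \<Rightarrow> 'm \<Rightarrow> 'm \<Rightarrow> 'm \<Rightarrow> bool" where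
  "is_pushout C f i j g \<longleftrightarrow>
     f \<in> Mor C \<and> i \<in> Mor C \<and> Dom C f = Dom C i \<and>
     j \<in> hom C (Cod C f) (Cod C j) \<and> g \<in> hom C (Cod C i) (Cod C j) \<and>
     Comp C j f = Comp C g i \<and>
     (\<forall>q u v. u \<in> hom C (Cod C f) q \<and> v \<in> hom C (Cod C i) q \<and> Comp C u f = Comp C v i \<longrightarrow>
        (\<exists>!h. h \<in> hom C (Cod C j) q \<and> Comp C h j = u \<and> Comp C h g = v))"

definition cat_with_cof :: "('o, 'm, 'e) cofcat_scheme \<Rightarrow> bool" where
  "cat_with_cof C \<longleftrightarrow>
     category C \<and> zero_object C (Zob C) \<and> Cof C \<subseteq> Mor C \<and>
     (\<forall>f. iso C f \<longrightarrow> f \<in> Cof C) \<and>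
     (\<forall>f \<in> Cof C. \<forall>g \<in> Cof C. Cod C f = Dom C g \<longrightarrow> Comp C g f \<in> Cof C) \<and>
     (\<forall>x \<in> Ob C. \<forall>f \<in> hom C (Zob C) x. f \<in> Cof C) \<and>
     (\<forall>i \<in> Cof C. \<forall>f \<in> Mor C. Dom C f = Dom C i \<longrightarrow>
        (\<exists>j g. is_pushout C f i j g \<and> j \<in> Cof C))"

definition cof_seq :: "('o, 'm, 'e) cofcat_scheme \<Rightarrow> 'm \<Rightarrow> 'm \<Rightarrow> bool" where
  "cof_seq C i q \<longleftrightarrow> i \<in> Cof C \<and>
     (\<exists>t s. t \<in> hom C (Dom C i) (Zob C) \<and> is_pushout C i t q s)"

definition admissible :: "('o, 'm, 'e) cofcat_scheme \<Rightarrow> 'm set \<Rightarrow> bool" where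
  "admissible C w \<longleftrightarrow> w \<subseteq> Mor C \<and>
     (\<forall>f. iso C f \<longrightarrow> f \<in> w) \<and>
     (\<forall>f \<in> Mor C. \<forall>g \<in> Mor C. Cod C f = Dom C g \<longrightarrow>
        (f \<in> w \<and> g \<in> w \<longrightarrow> Comp C g f \<in> w) \<and>
        (f \<in> w \<and> Comp C g f \<in> w \<longrightarrow> g \<in> w) \<and>
        (g \<in> w \<and> Comp C g f \<in> w \<longrightarrow> f \<in> w)) \<and>
     (\<forall>i q i' q' a b c.
        cof_seq C i q \<and> cof_seq C i' q' \<and>
        a \<in> hom C (Dom C i) (Dom C i') \<and> b \<in> hom C (Cod C i) (Cod C i') \<and>
        c \<in> hom C (Cod C q) (Cod C q') \<and>
        Comp C b i = Comp C i' a \<and> Comp C c q = Comp C q' b \<longrightarrow>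
        (a \<in> w \<and> b \<in> w \<longrightarrow> c \<in> w) \<and>
        (a \<in> w \<and> c \<in> w \<longrightarrow> b \<in> w) \<and>
        (b \<in> w \<and> c \<in> w \<longrightarrow> a \<in> w))"

definition gluing :: "('o, 'm, 'e) cofcat_scheme \<Rightarrow> 'm set \<Rightarrow> bool" where
  "gluing C w \<longleftrightarrow>
     (\<forall>f i j g f' i' j' g' a b c h.
        is_pushout C f i j g \<and> is_pushout C f' i' j' g' \<and> i \<in> Cof C \<and> i' \<in> Cof C \<and>
        a \<in> hom C (Dom C f) (Dom C f') \<and> b \<in> hom C (Cod C f) (Cod C f') \<and>
        c \<in> hom C (Cod C i) (Cod C i') \<and>
        Comp C b f = Comp C f' a \<and> Comp C c i = Comp C i' a \<and>
        a \<in> w \<and> b \<in> w \<and> c \<in> w \<and>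
        h \<in> hom C (Cod C j) (Cod C j') \<and> Comp C h j = Comp C j' b \<and> Comp C h g = Comp C g' c
        \<longrightarrow> h \<in> w)"

definition waldhausen_cat :: "('o, 'm, 'e) cofcat_scheme \<Rightarrow> 'm set \<Rightarrow> bool" where
  "waldhausen_cat C w \<longleftrightarrow> cat_with_cof C \<and> w \<subseteq> Mor C \<and>
     (\<forall>f. iso C f \<longrightarrow> f \<in> w) \<and>
     (\<forall>f \<in> w. \<forall>g \<in> w. Cod C f = Dom C g \<longrightarrow> Comp C g f \<in> w) \<and>
     gluing C w"

end

theory Submission
  imports Defs
begin

text \<open>Let \<open>j : y \<rightarrowtail> y \<squnion>\<^sub>x z\<close> be the pushout of the cofibration \<open>i : x \<rightarrowtail> z\<close> along \<open>x \<rightarrow> y\<close>.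
  Then \<open>j\<close> is a cofibration, and pasting pushout squares shows that \<open>j\<close> and \<open>i\<close> have the
  same cofiber.  The map of cofibration sequences \<open>x \<rightarrowtail> z \<twoheadrightarrow> z/x\<close> has its first two
  components \<open>a, c\<close> in \<open>w\<close>, so admissibility puts the induced map of cofibers in \<open>w\<close>; the map
  of cofibration sequences \<open>y \<rightarrowtail> y \<squnion>\<^sub>x z \<twoheadrightarrow> z/x\<close> then has first and third components in
  \<open>w\<close>, so its middle component, the gluing map, is in \<open>w\<close> as well.\<close>

lemma hom_iff: "f \<in> hom C x y \<longleftrightarrow> f \<in> Mor C \<and> Dom C f = x \<and> Cod C f = y"
  by (simp add: hom_def)

lemma comp_in_hom:
  "category C \<Longrightarrow> f \<in> hom C x y \<Longrightarrow> g \<in> hom C y z \<Longrightarrow> Comp C g f \<in> hom C x z"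
  unfolding category_def hom_def by auto

lemma comp_assoc:
  "category C \<Longrightarrow> f \<in> hom C x y \<Longrightarrow> g \<in> hom C y z \<Longrightarrow> h \<in> hom C z u \<Longrightarrow>
   Comp C h (Comp C g f) = Comp C (Comp C h g) f"
  unfolding category_def hom_def by auto

lemma id_in_hom: "category C \<Longrightarrow> f \<in> hom C x y \<Longrightarrow> Id C y \<in> hom C y y"
  unfolding category_def hom_def by auto

lemma comp_id_left: "category C \<Longrightarrow> f \<in> hom C x y \<Longrightarrow> Comp C (Id C y) f = f"
  unfolding category_def hom_def by auto

lemma morphism_to_zero_unique:
  assumes CW: "cat_with_cof C" and t: "t \<in> hom C y (Zob C)" and t': "t' \<in> hom C y (Zob C)"
  shows "t = t'"
proof -
  have "y \<in> Ob C" using CW t unfolding cat_with_cof_def category_def hom_def by auto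
  then have "\<exists>!f. f \<in> hom C y (Zob C)"
    using CW unfolding cat_with_cof_def zero_object_def by blast
  with t t' show ?thesis by blast
qed

lemma morphism_to_zero_exists:
  assumes CW: "cat_with_cof C" and f: "f \<in> Mor C"
  obtains t where "t \<in> hom C (Dom C f) (Zob C)"
proof -
  have "Dom C f \<in> Ob C" using CW f unfolding cat_with_cof_def category_def by auto
  then have "\<exists>!t. t \<in> hom C (Dom C f) (Zob C)"
    using CW unfolding cat_with_cof_def zero_object_def by blast
  with that show ?thesis by blast
qed

lemma is_pushout_sym: "is_pushout C f i j g \<Longrightarrow> is_pushout C i f g j"
  unfolding is_pushout_def by (auto simp: hom_def) metis+

lemma is_pushoutD:
  assumes "is_pushout C f i j g"
  shows "f \<in> hom C (Dom C f) (Cod C f)" "i \<in> hom C (Dom C f) (Cod C i)"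
    "j \<in> hom C (Cod C f) (Cod C j)" "g \<in> hom C (Cod C i) (Cod C j)"
    "Comp C j f = Comp C g i"
  using assms unfolding is_pushout_def hom_def by auto

lemma is_pushout_factor:
  assumes "is_pushout C f i j g" "u \<in> hom C (Cod C f) q" "v \<in> hom C (Cod C i) q"
    "Comp C u f = Comp C v i"
  obtains h where "h \<in> hom C (Cod C j) q" "Comp C h j = u" "Comp C h g = v"
  using assms unfolding is_pushout_def by blast

lemma is_pushout_factor_unique:
  assumes cat: "category C" and P: "is_pushout C f i j g"
    and h1: "h1 \<in> hom C (Cod C j) q" and h2: "h2 \<in> hom C (Cod C j) q"
    and "Comp C h1 j = Comp C h2 j" "Comp C h1 g = Comp C h2 g"
  shows "h1 = h2"
proof -
  note P' = is_pushoutD[OF P]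
  have "Comp C (Comp C h1 j) f = Comp C h1 (Comp C g i)"
    using comp_assoc[OF cat P'(1,3) h1] P'(5) by simp
  also have "\<dots> = Comp C (Comp C h1 g) i"
    using comp_assoc[OF cat P'(2,4) h1] .
  finally have "Comp C (Comp C h1 j) f = Comp C (Comp C h1 g) i" .
  with P comp_in_hom[OF cat P'(3) h1] comp_in_hom[OF cat P'(4) h1]
  have "\<exists>!h. h \<in> hom C (Cod C j) q \<and> Comp C h j = Comp C h1 j \<and> Comp C h g = Comp C h1 g"
    unfolding is_pushout_def by blast
  with assms show ?thesis by metis
qed

lemma is_pushout_paste:
  assumes cat: "category C" and P1: "is_pushout C f i j g" and P2: "is_pushout C j t q s"
  shows "is_pushout C i (Comp C t f) (Comp C q g) s"
proof -
  note B1 = is_pushoutD[OF P1] and B2 = is_pushoutD[OF P2]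
  have Dj: "Dom C j = Cod C f" using B1(3) by (simp add: hom_iff)
  have t: "t \<in> hom C (Cod C f) (Cod C t)" and q: "q \<in> hom C (Cod C j) (Cod C q)"
    using B2 Dj by (auto simp: hom_iff)
  have s: "s \<in> hom C (Cod C t) (Cod C q)" using B2(4) .
  have tf: "Comp C t f \<in> hom C (Dom C f) (Cod C t)" using comp_in_hom[OF cat B1(1) t] .
  have qg: "Comp C q g \<in> hom C (Cod C i) (Cod C q)" using comp_in_hom[OF cat B1(4) q] .
  have square: "Comp C (Comp C q g) i = Comp C s (Comp C t f)"
  proof -
    have "Comp C (Comp C q g) i = Comp C (Comp C q j) f"
      using comp_assoc[OF cat B1(2,4) q] comp_assoc[OF cat B1(1,3) q] B1(5) by simp
    also have "\<dots> = Comp C s (Comp C t f)"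
      using B2(5) comp_assoc[OF cat B1(1) t s] by simp
    finally show ?thesis .
  qed
  have universal: "\<exists>!m. m \<in> hom C (Cod C q) W \<and> Comp C m (Comp C q g) = u \<and> Comp C m s = v"
    if u: "u \<in> hom C (Cod C i) W" and v: "v \<in> hom C (Cod C t) W"
      and uv: "Comp C u i = Comp C v (Comp C t f)" for W u v
  proof -
    have vt: "Comp C v t \<in> hom C (Cod C f) W" using comp_in_hom[OF cat t v] .
    have "Comp C (Comp C v t) f = Comp C u i" using uv comp_assoc[OF cat B1(1) t v] by simp
    then obtain k where k: "k \<in> hom C (Cod C j) W" "Comp C k j = Comp C v t" "Comp C k g = u"
      using is_pushout_factor[OF P1 vt u] by blast
    obtain m where m: "m \<in> hom C (Cod C q) W" "Comp C m q = k" "Comp C m s = v"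
      using is_pushout_factor[OF P2 _ v k(2)] k(1) Dj by blast
    show ?thesis
    proof (rule ex1I[of _ m])
      show "m \<in> hom C (Cod C q) W \<and> Comp C m (Comp C q g) = u \<and> Comp C m s = v"
        using m k(3) comp_assoc[OF cat B1(4) q m(1)] by simp
    next
      fix m' assume m': "m' \<in> hom C (Cod C q) W \<and> Comp C m' (Comp C q g) = u \<and> Comp C m' s = v"
      then have m'h: "m' \<in> hom C (Cod C q) W" by simp
      have "Comp C (Comp C m' q) j = Comp C m' (Comp C s t)"
        using comp_assoc[OF cat B1(3) q m'h] B2(5) Dj by simp
      also have "\<dots> = Comp C k j" using comp_assoc[OF cat t s m'h] m' k(2) by simp
      finally have "Comp C m' q = k"
        using is_pushout_factor_unique[OF cat P1 comp_in_hom[OF cat q m'h] k(1)]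
          comp_assoc[OF cat B1(4) q m'h] m' k(3) by simp
      then show "m' = m"
        using is_pushout_factor_unique[OF cat P2] m'h m m' Dj by (simp add: hom_iff)
    qed
  qed
  show ?thesis
    unfolding is_pushout_def
  proof (intro conjI allI impI)
    fix W u v
    assume "u \<in> hom C (Cod C i) W \<and> v \<in> hom C (Cod C (Comp C t f)) W
      \<and> Comp C u i = Comp C v (Comp C t f)"
    then show "\<exists>!m. m \<in> hom C (Cod C (Comp C q g)) W \<and> Comp C m (Comp C q g) = u \<and> Comp C m s = v"
      using universal[of u W v] tf qg by (simp add: hom_iff)
  qed (use B1 tf qg s square in \<open>auto simp: hom_iff\<close>)
qed

lemma pushouts_comparison_iso:
  assumes cat: "category C" and P: "is_pushout C f i j g" and P0: "is_pushout C f i j0 g0"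
  obtains k where "iso C k" "k \<in> hom C (Cod C j0) (Cod C j)" "Comp C k j0 = j" "Comp C k g0 = g"
proof -
  note B = is_pushoutD[OF P] and B0 = is_pushoutD[OF P0]
  obtain k where k: "k \<in> hom C (Cod C j0) (Cod C j)" "Comp C k j0 = j" "Comp C k g0 = g"
    using is_pushout_factor[OF P0 B(3,4,5)] .
  obtain l where l: "l \<in> hom C (Cod C j) (Cod C j0)" "Comp C l j = j0" "Comp C l g = g0"
    using is_pushout_factor[OF P B0(3,4,5)] .
  have "Comp C l k = Id C (Cod C j0)"
    using is_pushout_factor_unique[OF cat P0 comp_in_hom[OF cat k(1) l(1)] id_in_hom[OF cat B0(3)]]
      comp_assoc[OF cat B0(3) k(1) l(1)] comp_assoc[OF cat B0(4) k(1) l(1)]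
      comp_id_left[OF cat B0(3)] comp_id_left[OF cat B0(4)] k l by simp
  moreover have "Comp C k l = Id C (Cod C j)"
    using is_pushout_factor_unique[OF cat P comp_in_hom[OF cat l(1) k(1)] id_in_hom[OF cat B(3)]]
      comp_assoc[OF cat B(3) l(1) k(1)] comp_assoc[OF cat B(4) l(1) k(1)]
      comp_id_left[OF cat B(3)] comp_id_left[OF cat B(4)] k l by simp
  ultimately have "iso C k" using k(1) l(1) unfolding iso_def hom_def by auto
  with k show ?thesis using that by blast
qed

text \<open>The axioms only provide \<^emph>\<open>some\<close> pushout of a cofibration that is a cofibration; any other
  pushout differs from it by an isomorphism, which is a cofibration too.\<close>
lemma cof_pushout_cof:
  assumes CW: "cat_with_cof C" and P: "is_pushout C f i j g" and i: "i \<in> Cof C"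
  shows "j \<in> Cof C"
proof -
  have cat: "category C" using CW by (simp add: cat_with_cof_def)
  have "f \<in> Mor C" "Dom C f = Dom C i" using P by (auto simp: is_pushout_def)
  then obtain j0 g0 where P0: "is_pushout C f i j0 g0" and j0: "j0 \<in> Cof C"
    using CW i unfolding cat_with_cof_def by blast
  obtain k where k: "iso C k" "k \<in> hom C (Cod C j0) (Cod C j)" "Comp C k j0 = j"
    using pushouts_comparison_iso[OF cat P P0] by blast
  have "Comp C k j0 \<in> Cof C"
    using CW j0 k(1,2) is_pushoutD(3)[OF P0] unfolding cat_with_cof_def hom_def by auto
  with k(3) show ?thesis by simp
qed

lemma cof_seq_exists:
  assumes CW: "cat_with_cof C" and j: "j \<in> Cof C"
  obtains q where "cof_seq C j q"
proof -
  have "j \<in> Mor C" using CW j by (auto simp: cat_with_cof_def)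
  then obtain t where t: "t \<in> hom C (Dom C j) (Zob C)"
    using morphism_to_zero_exists[OF CW] by blast
  then obtain s q where "is_pushout C t j s q"
    using CW j unfolding cat_with_cof_def hom_def by blast
  with t j have "cof_seq C j q" unfolding cof_seq_def by (blast dest: is_pushout_sym)
  then show ?thesis by (rule that)
qed

lemma cof_seq_of_pushout:
  assumes CW: "cat_with_cof C" and P: "is_pushout C f i j g" and i: "i \<in> Cof C"
    and seq: "cof_seq C j q"
  shows "cof_seq C i (Comp C q g)"
proof -
  have cat: "category C" using CW by (simp add: cat_with_cof_def)
  obtain t s where t: "t \<in> hom C (Dom C j) (Zob C)" and P2: "is_pushout C j t q s"
    using seq unfolding cof_seq_def by blast
  note B = is_pushoutD[OF P]
  have "Comp C t f \<in> hom C (Dom C i) (Zob C)"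
    using comp_in_hom[OF cat B(1)] t B(2,3) by (simp add: hom_iff)
  with i is_pushout_paste[OF cat P P2] show ?thesis unfolding cof_seq_def by blast
qed

lemma cof_seq_induced_map:
  assumes CW: "cat_with_cof C" and seq: "cof_seq C j q" and seq': "cof_seq C j' q'"
    and b: "b \<in> hom C (Dom C j) (Dom C j')" and h: "h \<in> hom C (Cod C j) (Cod C j')"
    and hb: "Comp C h j = Comp C j' b"
  obtains c where "c \<in> hom C (Cod C q) (Cod C q')" "Comp C c q = Comp C q' h"
proof -
  have cat: "category C" using CW by (simp add: cat_with_cof_def)
  obtain t s where t: "t \<in> hom C (Dom C j) (Zob C)" and P: "is_pushout C j t q s"
    using seq unfolding cof_seq_def by blast
  obtain t' s' where t': "t' \<in> hom C (Dom C j') (Zob C)" and P': "is_pushout C j' t' q' s'"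
    using seq' unfolding cof_seq_def by blast
  note B = is_pushoutD[OF P] and B' = is_pushoutD[OF P']
  have j: "j \<in> hom C (Dom C j) (Cod C j)" and j': "j' \<in> hom C (Dom C j') (Cod C j')"
    using B(1) B'(1) by simp_all
  have q': "q' \<in> hom C (Cod C j') (Cod C q')" using B'(3) by simp
  have s': "s' \<in> hom C (Zob C) (Cod C q')" using B'(4) t' by (simp add: hom_iff)
  have u: "Comp C q' h \<in> hom C (Cod C j) (Cod C q')" using comp_in_hom[OF cat h q'] .
  have v: "s' \<in> hom C (Cod C t) (Cod C q')" using s' t by (simp add: hom_iff)
  have "Comp C (Comp C q' h) j = Comp C (Comp C q' j') b"
    using comp_assoc[OF cat j h q'] comp_assoc[OF cat b j' q'] hb by simp
  also have "\<dots> = Comp C s' (Comp C t' b)"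
    using B'(5) comp_assoc[OF cat b t' s'] by simp
  also have "Comp C t' b = t"
    using morphism_to_zero_unique[OF CW comp_in_hom[OF cat b t'] t] .
  finally obtain c where "c \<in> hom C (Cod C q) (Cod C q')" "Comp C c q = Comp C q' h"
    using is_pushout_factor[OF P u v] by (metis hom_iff)
  then show ?thesis by (rule that)
qed

lemma admissible_cof_seqD:
  assumes "admissible C w" "cof_seq C i q" "cof_seq C i' q'"
    "a \<in> hom C (Dom C i) (Dom C i')" "b \<in> hom C (Cod C i) (Cod C i')"
    "c \<in> hom C (Cod C q) (Cod C q')" "Comp C b i = Comp C i' a" "Comp C c q = Comp C q' b"
  shows "a \<in> w \<Longrightarrow> b \<in> w \<Longrightarrow> c \<in> w" and "a \<in> w \<Longrightarrow> c \<in> w \<Longrightarrow> b \<in> w"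
  using assms unfolding admissible_def by blast+

lemma admissible_gluing:
  assumes CW: "cat_with_cof C" and adm: "admissible C w"
  shows "gluing C w"
  unfolding gluing_def
proof (intro allI impI, elim conjE)
  fix f i j g f' i' j' g' a b c h
  assume P: "is_pushout C f i j g" and P': "is_pushout C f' i' j' g'"
    and i: "i \<in> Cof C" and i': "i' \<in> Cof C"
    and a: "a \<in> hom C (Dom C f) (Dom C f')" and b: "b \<in> hom C (Cod C f) (Cod C f')"
    and c: "c \<in> hom C (Cod C i) (Cod C i')" and "Comp C b f = Comp C f' a"
    and ca: "Comp C c i = Comp C i' a" and aw: "a \<in> w" and bw: "b \<in> w" and cw: "c \<in> w"
    and h: "h \<in> hom C (Cod C j) (Cod C j')" and hb: "Comp C h j = Comp C j' b"
    and hc: "Comp C h g = Comp C g' c"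
  have cat: "category C" using CW by (simp add: cat_with_cof_def)
  note B = is_pushoutD[OF P] and B' = is_pushoutD[OF P']
  have j: "j \<in> Cof C" and j': "j' \<in> Cof C"
    using cof_pushout_cof[OF CW P i] cof_pushout_cof[OF CW P' i'] .
  obtain q where seq: "cof_seq C j q" using cof_seq_exists[OF CW j] .
  obtain q' where seq': "cof_seq C j' q'" using cof_seq_exists[OF CW j'] .
  have b': "b \<in> hom C (Dom C j) (Dom C j')" and a': "a \<in> hom C (Dom C i) (Dom C i')"
    using a b B(2,3) B'(2,3) by (simp_all add: hom_iff)
  obtain e where e: "e \<in> hom C (Cod C q) (Cod C q')" "Comp C e q = Comp C q' h"
    using cof_seq_induced_map[OF CW seq seq' b' h hb] .
  have q: "q \<in> hom C (Cod C j) (Cod C q)" and q': "q' \<in> hom C (Cod C j') (Cod C q')"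
    using seq seq' unfolding cof_seq_def by (auto simp: is_pushout_def)
  have "Comp C e (Comp C q g) = Comp C q' (Comp C h g)"
    using comp_assoc[OF cat B(4) q e(1)] comp_assoc[OF cat B(4) h q'] e(2) by simp
  also have "\<dots> = Comp C (Comp C q' g') c"
    using hc comp_assoc[OF cat c B'(4) q'] by simp
  finally have "e \<in> w"
    using admissible_cof_seqD(1)[OF adm cof_seq_of_pushout[OF CW P i seq]
        cof_seq_of_pushout[OF CW P' i' seq'] a' c _ ca] aw cw e(1)
      comp_in_hom[OF cat B(4) q] comp_in_hom[OF cat B'(4) q']
    by (simp add: hom_iff)
  then show "h \<in> w"
    using admissible_cof_seqD(2)[OF adm seq seq' b' h e(1) hb e(2)] bw by blast
qed

theorem lemma1p2:
  fixes C :: "('o, 'm) cofcat" and w :: "'m set"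
  assumes "cat_with_cof C"
    and "ab_enriched C"
    and "admissible C w"
  shows "gluing C w \<and> waldhausen_cat C w"
proof -
  have "gluing C w" using admissible_gluing[OF assms(1,3)] .
  moreover have "\<forall>f \<in> w. \<forall>g \<in> w. Cod C f = Dom C g \<longrightarrow> Comp C g f \<in> w"
    using assms(3) unfolding admissible_def by blast
  ultimately show ?thesis
    using assms(1,3) unfolding waldhausen_cat_def admissible_def by blast
qed

end
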